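(* Let $\nu_n(x_0,x_1)$ ($n\ge 0$) be any nonvanishing functions and $\bar P_n(x;x_0,x_1)=\nu_n(x_0,x_1)P_n(x;x_0,x_1)$. Then for all $n\ge1$: $$\mathcal{A}_2\bar P_n=\frac{\mathrm{i}\,q^{-\frac14}}{1-x_0^2}\Bigg\{x_0^2\frac{\nu_n(q^{-\frac12}x_0,x_1)}{\nu_{n+1}(x_0,x_1)}\bar P_{n+1}-\frac{\nu_n(q^{\frac12}x_0,x_1)}{\nu_{n-1}(x_0,x_1)}\lambda_n(x_0,x_1)\bar P_{n-1}+\left(x_0^2\frac{\gamma_n(q^{-\frac12}x_0,x_1)}{\lambda_n(q^{-\frac12}x_0,x_1)}\frac{\nu_n(q^{-\frac12}x_0,x_1)}{\nu_n(x_0,x_1)}-\frac{\nu_n(q^{\frac12}x_0,x_1)}{\nu_n(x_0,x_1)}\right)\bar P_n\Bigg\},$$ $$\mathcal{A}_4\bar P_n=\frac{\mathrm{i}\,q^{-\frac14}}{1-x_1^2}\Bigg\{x_1^2\frac{\nu_n(x_0,q^{-\frac12}x_1)}{\nu_{n+1}(x_0,x_1)}\bar P_{n+1}-\frac{\nu_n(x_0,q^{\frac12}x_1)}{\nu_{n-1}(x_0,x_1)}\lambda_n(x_1,x_0)\bar P_{n-1}+\left(x_1^2\frac{\gamma_n(x_0,q^{-\frac12}x_1)}{\lambda_n(q^{-\frac12}x_1,x_0)}\frac{\nu_n(x_0,q^{-\frac12}x_1)}{\nu_n(x_0,x_1)}-\frac{\nu_n(x_0,q^{\frac12}x_1)}{\nu_n(x_0,x_1)}\right)\bar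 P_n\Bigg\},$$ where on the right-hand sides $\bar P_m=\bar P_m(x;x_0,x_1)$.
   Context: Let $q$ be a complex parameter with $0<|q|<1$, with a fixed choice of $q^{1/4}$ and $q^{k/4}:=(q^{1/4})^k$; $x,x_0,x_1$ are variables; $\mathrm{i}=\sqrt{-1}$. Notation: $(y)_n=(y;q)_n=\prod_{i=1}^{n}(1-yq^{i-1})$, $(y_1,\dots,y_k)_n=(y_1)_n\cdots(y_k)_n$. Operators on functions $f(x,x_0,x_1)$: $\eth_0 f(x,x_0,x_1)=f(x,q^{1/2}x_0,x_1)$, $\eth_1 f(x,x_0,x_1)=f(x,x_0,q^{1/2}x_1)$, with inverses defined accordingly; a function written to the left of an operator acts by multiplication after the operator is applied. For $n\ge0$, $$P_n(x;x_0,x_1)=(-1)^nq^{-\frac n2}\frac{\left(q,\frac{q}{x_0^2},\frac{q}{x_1^2}\right)_n}{\left(\frac{q^{n+1}}{x_0^2x_1^2}\right)_n}\sum_{k=0}^{n}q^k\frac{\left(q^{-n},\frac{q^{n+1}}{x_0^2x_1^2}\right)_k}{\left(q,q,\frac{q}{x_0^2},\frac{q}{x_1^2}\right)_k}\left(-q^{\frac12}x,-q^{\frac12}x^{-1}\right)_k$$ (the Askey–Wilson polynomial with parameters $(a,b,c,d)=(-q^{1/2},-q^{1/2},-q^{1/2}/x_0^2,-q^{1/2}/x_1^2)$). For $b\in\{0,1\}$ let $$G_0(x_b;x)=-\frac{1}{1-x_b^2}\eth_b+\frac{(q^{\frac12}x+x_b^2)(q^{\frac12}+x\,x_b^2)}{q^{\frac12}x(1-x_b^2)}\eth_b^{-1},$$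 and $\mathcal{A}_2=\mathrm{i}\,q^{-1/4}G_0(x_0;x)$, $\mathcal{A}_4=\mathrm{i}\,q^{-1/4}G_0(x_1;x)$ (images of the curves $\mathbb{k}_2,\mathbb{k}_4$ of the genus-two skein algebra). Further, $$\gamma_n(x_0,x_1)=\frac{(1-q^n)^2\left(1-\frac{q^n}{x_0^2x_1^2}\right)^2\left(1-\frac{q^n}{x_0^2}\right)^2\left(1-\frac{q^n}{x_1^2}\right)^2}{\left(1-\frac{q^{2n-1}}{x_0^2x_1^2}\right)\left(1-\frac{q^{2n}}{x_0^2x_1^2}\right)^2\left(1-\frac{q^{2n+1}}{x_0^2x_1^2}\right)},\qquad \lambda_n(x_0,x_1)=\frac{q^{-\frac12}(1-q^n)^2\left(1-\frac{q^n}{x_1^2}\right)^2}{x_0^2\left(1-\frac{q^{2n-1}}{x_0^2x_1^2}\right)\left(1-\frac{q^{2n}}{x_0^2x_1^2}\right)}.$$ *)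

theory Defs
  imports Complex_Main
begin

text \<open>Parameters: q with 0 < |q| < 1 and a fixed fourth root r = q^(1/4);
  q^(k/4) := r^k, in particular q^(1/2) = r^2.\<close>

definition qpoch :: "complex \<Rightarrow> complex \<Rightarrow> nat \<Rightarrow> complex" where
  "qpoch q y n = (\<Prod>i<n. (1 - y * q ^ i))"

definition AWP :: "complex \<Rightarrow> complex \<Rightarrow> nat \<Rightarrow> complex \<Rightarrow> complex \<Rightarrow> complex \<Rightarrow> complex" where
  "AWP q r n x x0 x1 =
     (-1) ^ n * (1 / r ^ 2) ^ n *
     (qpoch q q n * qpoch q (q / x0 ^ 2) n * qpoch q (q / x1 ^ 2) n)
       / qpoch q (q ^ (n + 1) / (x0 ^ 2 * x1 ^ 2)) n *
     (\<Sum>k\<le>n. q ^ k *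
        (qpoch q (inverse (q ^ n)) k * qpoch q (q ^ (n + 1) / (x0 ^ 2 * x1 ^ 2)) k)
        / (qpoch q q k * qpoch q q k * qpoch q (q / x0 ^ 2) k * qpoch q (q / x1 ^ 2) k)
        * (qpoch q (- (r ^ 2) * x) k * qpoch q (- (r ^ 2) / x) k))"

definition eth0 :: "complex \<Rightarrow> (complex \<Rightarrow> complex \<Rightarrow> complex \<Rightarrow> complex) \<Rightarrow> complex \<Rightarrow> complex \<Rightarrow> complex \<Rightarrow> complex" where
  "eth0 s f x x0 x1 = f x (s * x0) x1"

definition eth1 :: "complex \<Rightarrow> (complex \<Rightarrow> complex \<Rightarrow> complex \<Rightarrow> complex) \<Rightarrow> complex \<Rightarrow> complex \<Rightarrow> complex \<Rightarrow> complex" where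
  "eth1 s f x x0 x1 = f x x0 (s * x1)"

text \<open>G_0(x_0; x): here \<open>eth0 (r^2)\<close> is \<open>\<eth>\<^sub>0\<close> and \<open>eth0 (1/r^2)\<close> its inverse.\<close>
definition G0_x0 :: "complex \<Rightarrow> (complex \<Rightarrow> complex \<Rightarrow> complex \<Rightarrow> complex) \<Rightarrow> complex \<Rightarrow> complex \<Rightarrow> complex \<Rightarrow> complex" where
  "G0_x0 r f x x0 x1 =
     - 1 / (1 - x0 ^ 2) * eth0 (r ^ 2) f x x0 x1
     + ((r ^ 2 * x + x0 ^ 2) * (r ^ 2 + x * x0 ^ 2)) / (r ^ 2 * x * (1 - x0 ^ 2))
       * eth0 (1 / r ^ 2) f x x0 x1"

definition G0_x1 :: "complex \<Rightarrow> (complex \<Rightarrow> complex \<Rightarrow> complex \<Rightarrow> complex) \<Rightarrow> complex \<Rightarrow> complex \<Rightarrow> complex \<Rightarrow> complex" where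
  "G0_x1 r f x x0 x1 =
     - 1 / (1 - x1 ^ 2) * eth1 (r ^ 2) f x x0 x1
     + ((r ^ 2 * x + x1 ^ 2) * (r ^ 2 + x * x1 ^ 2)) / (r ^ 2 * x * (1 - x1 ^ 2))
       * eth1 (1 / r ^ 2) f x x0 x1"

definition A2 :: "complex \<Rightarrow> (complex \<Rightarrow> complex \<Rightarrow> complex \<Rightarrow> complex) \<Rightarrow> complex \<Rightarrow> complex \<Rightarrow> complex \<Rightarrow> complex" where
  "A2 r f x x0 x1 = \<i> * (1 / r) * G0_x0 r f x x0 x1"

definition A4 :: "complex \<Rightarrow> (complex \<Rightarrow> complex \<Rightarrow> complex \<Rightarrow> complex) \<Rightarrow> complex \<Rightarrow> complex \<Rightarrow> complex \<Rightarrow> complex" where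
  "A4 r f x x0 x1 = \<i> * (1 / r) * G0_x1 r f x x0 x1"

definition gammaAW :: "complex \<Rightarrow> nat \<Rightarrow> complex \<Rightarrow> complex \<Rightarrow> complex" where
  "gammaAW q n x0 x1 =
     ((1 - q ^ n) ^ 2 * (1 - q ^ n / (x0 ^ 2 * x1 ^ 2)) ^ 2 * (1 - q ^ n / x0 ^ 2) ^ 2
        * (1 - q ^ n / x1 ^ 2) ^ 2)
     / ((1 - q ^ (2 * n - 1) / (x0 ^ 2 * x1 ^ 2)) * (1 - q ^ (2 * n) / (x0 ^ 2 * x1 ^ 2)) ^ 2
        * (1 - q ^ (2 * n + 1) / (x0 ^ 2 * x1 ^ 2)))"

text \<open>lambda_n; the factor q^(-1/2) is 1/r^2.\<close>
definition lambdaAW :: "complex \<Rightarrow> complex \<Rightarrow> nat \<Rightarrow> complex \<Rightarrow> complex \<Rightarrow> complex" where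
  "lambdaAW q r n x0 x1 =
     (1 / r ^ 2) * (1 - q ^ n) ^ 2 * (1 - q ^ n / x1 ^ 2) ^ 2
     / (x0 ^ 2 * (1 - q ^ (2 * n - 1) / (x0 ^ 2 * x1 ^ 2)) * (1 - q ^ (2 * n) / (x0 ^ 2 * x1 ^ 2)))"

definition Pbar :: "complex \<Rightarrow> complex \<Rightarrow> (nat \<Rightarrow> complex \<Rightarrow> complex \<Rightarrow> complex) \<Rightarrow> nat
    \<Rightarrow> complex \<Rightarrow> complex \<Rightarrow> complex \<Rightarrow> complex" where
  "Pbar q r \<nu> n x x0 x1 = \<nu> n x0 x1 * AWP q r n x x0 x1"

end

(* Write s = q^(1/2), a = x0^2, b = x1^2 and phi_k(x) = (-s x, -s/x; q)_k, so that
   P_n(x) = sum_k c_{n,k}(a,b) phi_k(x).  G_0(x0; x) P_n combines P_n(x; q a, b) with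
   H(x) P_n(x; a/q, b), where H(x) = (s x + a)(s + x a)/(s x), and two contiguous relations
   finish the proof:
     P_n(q a) = P_n(a) + lambda_n P_(n-1)(a),
     H(x) P_n(a/q) = a P_(n+1)(a) + a (gamma_n/lambda_n)(a/q) P_n(a).
   Both are proved coefficientwise.  Under k -> k+1, a -> q a and n -> n+1 the coefficient
   c_{n,k}(a,b) changes by an explicit rational factor in q^n, q^k, a, b, and H(x) phi_k is a
   combination of phi_k and phi_(k+1); so each coefficient identity is a polynomial identity.
   The formula for A_4 follows from the one for A_2 since P_n is symmetric in x0 and x1. *)
theory Submission
  imports Defs
begin

section \<open>q-Pochhammer symbols\<close>

lemma qpoch_Suc: "qpoch q y (Suc m) = qpoch q y m * (1 - y * q ^ m)"
  by (simp add: qpoch_def)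

lemma qpoch_mult_q: "(1 - y) * qpoch q (q * y) m = qpoch q y m * (1 - y * q ^ m)"
proof -
  have "(1 - y) * qpoch q (q * y) m = qpoch q y (Suc m)"
    unfolding qpoch_def prod.lessThan_Suc_shift by (simp add: ac_simps)
  then show ?thesis
    by (simp add: qpoch_Suc)
qed

lemma qpoch_shift_down:
  "1 - y * q ^ m \<noteq> 0 \<Longrightarrow> qpoch q y m = (1 - y) * qpoch q (q * y) m / (1 - y * q ^ m)"
  by (simp add: qpoch_mult_q)

lemma qpoch_shift_up:
  "1 - y \<noteq> 0 \<Longrightarrow> qpoch q (q * y) m = qpoch q y m * (1 - y * q ^ m) / (1 - y)"
  by (simp add: qpoch_mult_q flip: qpoch_mult_q)

lemma qpoch_eq_0_iff: "qpoch q y m = 0 \<longleftrightarrow> (\<exists>i<m. y * q ^ i = 1)"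
  by (auto simp: qpoch_def)

section \<open>Coefficients of the Askey-Wilson polynomials\<close>

locale askey_wilson =
  fixes q s :: complex
  assumes q_pos: "0 < norm q" and q_lt_1: "norm q < 1" and s_squared: "s ^ 2 = q"
begin

lemma q_nonzero [simp]: "q \<noteq> 0" and s_nonzero [simp]: "s \<noteq> 0"
  using q_pos s_squared by auto

lemma q_power_eq_iff [simp]: "q ^ i = q ^ j \<longleftrightarrow> i = j"
proof
  assume "q ^ i = q ^ j"
  then have "norm q ^ i = norm q ^ j"
    by (metis norm_power)
  then show "i = j"
    using q_pos q_lt_1 by (metis less_irrefl linorder_neqE_nat power_strict_decreasing)
qed simp

lemma q_power_eq_1_iff [simp]: "q ^ i = 1 \<longleftrightarrow> i = 0"
  using q_power_eq_iff[of i 0] by simp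

lemma q_mult_power_neq_1 [simp]: "q * q ^ i \<noteq> 1"
  using q_power_eq_1_iff[of "Suc i"] by simp

(* Genericity keeps every denominator in the coefficient formulas below nonzero. *)
definition generic :: "complex \<Rightarrow> bool" where
  "generic c \<longleftrightarrow> c \<noteq> 0 \<and> (\<forall>m::int. c \<noteq> q powi m)"

lemma generic_nonzero: "generic c \<Longrightarrow> c \<noteq> 0"
  by (simp add: generic_def)

lemma generic_neq_power: "generic c \<Longrightarrow> c \<noteq> q ^ i"
  unfolding generic_def by (metis power_int_of_nat)

lemma generic_mult_q:
  assumes "generic c"
  shows "generic (q * c)"
  unfolding generic_def
proof (intro conjI allI)
  show "q * c \<noteq> 0"
    using assms by (simp add: generic_def)
  fix m :: int
  have "c \<noteq> q powi (m - 1)"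
    using assms by (simp add: generic_def)
  then show "q * c \<noteq> q powi m"
    by (auto simp: power_int_diff field_simps)
qed

lemma generic_div_q: "generic c \<Longrightarrow> generic (c / q)"
  unfolding generic_def
  by (metis divide_eq_0_iff power_int_add_1 q_nonzero nonzero_divide_eq_eq mult.commute)

lemma qpoch_q_nonzero: "qpoch q q k \<noteq> 0"
  by (auto simp: qpoch_eq_0_iff simp flip: power_Suc)

lemma qpoch_generic_nonzero: "generic c \<Longrightarrow> qpoch q (q ^ j / c) k \<noteq> 0"
  by (auto simp: qpoch_eq_0_iff field_simps generic_nonzero simp flip: power_add
      dest: generic_neq_power)

definition aw_norm :: "nat \<Rightarrow> complex \<Rightarrow> complex \<Rightarrow> complex" where
  "aw_norm n a b = (-1) ^ n * (1 / s) ^ n *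
     (qpoch q q n * qpoch q (q / a) n * qpoch q (q / b) n) / qpoch q (q ^ (n + 1) / (a * b)) n"

definition aw_term :: "nat \<Rightarrow> complex \<Rightarrow> complex \<Rightarrow> nat \<Rightarrow> complex" where
  "aw_term n a b k = q ^ k *
     (qpoch q (inverse (q ^ n)) k * qpoch q (q ^ (n + 1) / (a * b)) k)
     / (qpoch q q k * qpoch q q k * qpoch q (q / a) k * qpoch q (q / b) k)"

definition aw_coeff :: "nat \<Rightarrow> complex \<Rightarrow> complex \<Rightarrow> nat \<Rightarrow> complex" where
  "aw_coeff n a b k = aw_norm n a b * aw_term n a b k"

lemma aw_term_Suc_index:
  assumes "generic a" "generic b"
  shows "aw_term n a b (Suc k) = aw_term n a b k
    * (q * (1 - q^k / q^n) * (1 - q^(n+1) * q^k / (a*b)))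
    / ((1 - q*q^k)^2 * (1 - q*q^k/a) * (1 - q*q^k/b))"
proof -
  have "qpoch q (q / a) k \<noteq> 0" "qpoch q (q / b) k \<noteq> 0"
    using qpoch_generic_nonzero[OF assms(1), of 1] qpoch_generic_nonzero[OF assms(2), of 1]
    by simp_all
  then show ?thesis
    using qpoch_q_nonzero[of k]
    unfolding aw_term_def qpoch_Suc by (simp add: ac_simps power2_eq_square divide_inverse)
qed

lemma aw_norm_mult_q:
  assumes "generic a" "generic b" "generic (a*b)"
  shows "aw_norm n (q*a) b = aw_norm n a b
    * ((1 - 1/a) * (1 - q^n*q^n/(a*b))) / ((1 - q^n/a) * (1 - q^n/(a*b)))"
proof -
  have nz: "1 - q^n/a \<noteq> 0" "1 - q^n/(a*b) \<noteq> 0" "1 - q^n*q^n/(a*b) \<noteq> 0"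
      "qpoch q (q^(n+1)/(a*b)) n \<noteq> 0"
    using generic_neq_power[OF assms(1), of n] generic_neq_power[OF assms(3), of n]
      generic_neq_power[OF assms(3), of "n+n"] qpoch_generic_nonzero[OF assms(3), of "n+1"]
      generic_nonzero[OF assms(1)] generic_nonzero[OF assms(2)]
    by (auto simp: power_add)
  have shift_a: "qpoch q (q/(q*a)) n = (1 - 1/a) * qpoch q (q/a) n / (1 - q^n/a)"
    using qpoch_shift_down[where q = q and y = "1/a" and m = n] nz by simp
  have shift_ab: "qpoch q (q^(n+1)/(q*a*b)) n
      = (1 - q^n/(a*b)) * qpoch q (q^(n+1)/(a*b)) n / (1 - q^n*q^n/(a*b))"
    using qpoch_shift_down[where q = q and y = "q^n/(a*b)" and m = n] nz by simp
  show ?thesis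
    unfolding aw_norm_def shift_a shift_ab
    using nz generic_nonzero[OF assms(1)] generic_nonzero[OF assms(2)] by (simp add: field_simps)
qed

lemma aw_term_mult_q:
  assumes "generic a" "generic b" "generic (a*b)"
  shows "aw_term n (q*a) b k = aw_term n a b k
    * ((1 - q^n/(a*b)) * (1 - q^k/a)) / ((1 - q^n*q^k/(a*b)) * (1 - 1/a))"
proof -
  have nz: "1 - q^k/a \<noteq> 0" "1 - 1/a \<noteq> 0" "1 - q^n*q^k/(a*b) \<noteq> 0"
      "qpoch q (q/a) k \<noteq> 0" "qpoch q (q/b) k \<noteq> 0"
    using generic_neq_power[OF assms(1), of k] generic_neq_power[OF assms(1), of 0]
      generic_neq_power[OF assms(3), of "n+k"]
      qpoch_generic_nonzero[OF assms(1), of 1] qpoch_generic_nonzero[OF assms(2), of 1]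
      generic_nonzero[OF assms(1)] generic_nonzero[OF assms(2)]
    by (auto simp: power_add)
  have shift_a: "qpoch q (q/(q*a)) k = (1 - 1/a) * qpoch q (q/a) k / (1 - q^k/a)"
    using qpoch_shift_down[where q = q and y = "1/a" and m = k] nz by simp
  have shift_ab: "qpoch q (q^(n+1)/(q*a*b)) k
      = (1 - q^n/(a*b)) * qpoch q (q^(n+1)/(a*b)) k / (1 - q^n*q^k/(a*b))"
    using qpoch_shift_down[where q = q and y = "q^n/(a*b)" and m = k] nz by simp
  show ?thesis
    unfolding aw_term_def shift_a shift_ab
    using nz generic_nonzero[OF assms(1)] generic_nonzero[OF assms(2)] qpoch_q_nonzero[of k]
    by (simp add: field_simps)
qed

lemma aw_norm_Suc_degree:
  assumes "generic (a*b)"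
  shows "aw_norm (Suc n) a b = aw_norm n a b * (- (1/s))
    * (1 - q*q^n) * (1 - q/a*q^n) * (1 - q/b*q^n) * (1 - q^(n+1)/(a*b))
    / ((1 - q^(n+1)/(a*b)*q^n) * (1 - q^(n+1)/(a*b)*q^(n+1)))"
proof -
  let ?y = "q^(n+1)/(a*b)"
  have "1 - ?y \<noteq> 0"
    using generic_neq_power[OF assms, of "n+1"] generic_nonzero[OF assms] by (auto simp: field_simps)
  then have "qpoch q (q^(Suc n+1)/(a*b)) (Suc n)
      = qpoch q ?y n * (1 - ?y*q^n) * (1 - ?y*q^(n+1)) / (1 - ?y)"
    using qpoch_mult_q[where q = q and y = ?y and m = "Suc n"]
    by (simp add: qpoch_Suc nonzero_eq_divide_eq mult_ac)
  then show ?thesis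
    unfolding aw_norm_def qpoch_Suc[of q q] qpoch_Suc[of q "q/a"] qpoch_Suc[of q "q/b"]
    by (simp add: divide_inverse inverse_mult_distrib mult_ac)
qed

lemma aw_term_Suc_degree:
  assumes "generic (a*b)"
  shows "aw_term n a b k = aw_term (Suc n) a b k * (1 - inverse (q^(Suc n)) * q^k)
    * (1 - q^(n+1)/(a*b)) / ((1 - inverse (q^(Suc n))) * (1 - q^(n+1)/(a*b)*q^k))"
proof -
  let ?y = "inverse (q^(Suc n))" and ?z = "q^(n+1)/(a*b)"
  have nz: "1 - ?y \<noteq> 0" "1 - ?z \<noteq> 0" "1 - ?z*q^k \<noteq> 0"
    using generic_neq_power[OF assms, of "n+1+k"] generic_neq_power[OF assms, of "n+1"]
      generic_nonzero[OF assms]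
    by (auto simp: field_simps power_add)
  have y: "q * ?y = inverse (q^n)" and z: "q * ?z = q^(Suc n+1)/(a*b)"
    by (simp_all add: field_simps)
  show ?thesis
    unfolding aw_term_def qpoch_shift_up[where q = q and m = k, OF nz(1), unfolded y]
      qpoch_shift_up[where q = q and m = k, OF nz(2), unfolded z]
    using nz by (simp add: divide_inverse inverse_mult_distrib mult_ac)
qed

lemma aw_coeff_Suc_index:
  assumes "generic a" "generic b"
  shows "aw_coeff n a b (Suc k) * (q^n * (1 - q*q^k)^2 * (a - q*q^k) * (b - q*q^k))
    = aw_coeff n a b k * (q * (q^n - q^k) * (a*b - q*q^n*q^k))"
proof -
  have "1 - q*q^k \<noteq> 0" "a - q*q^k \<noteq> 0" "b - q*q^k \<noteq> 0"
    using generic_neq_power[OF assms(1), of "Suc k"] generic_neq_power[OF assms(2), of "Suc k"]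
    by auto
  then show ?thesis
    using generic_nonzero[OF assms(1)] generic_nonzero[OF assms(2)]
    unfolding aw_coeff_def aw_term_Suc_index[OF assms] by (simp add: divide_simps)
qed

lemma aw_coeff_mult_q:
  assumes "generic a" "generic b" "generic (a*b)"
  shows "aw_coeff n (q*a) b k * ((a - q^n) * (a*b - q^n*q^k))
    = aw_coeff n a b k * ((a*b - q^n*q^n) * (a - q^k))"
proof -
  have "a - q^n \<noteq> 0" "a*b - q^n \<noteq> 0" "a*b - q^n*q^k \<noteq> 0" "a - 1 \<noteq> 0"
    using generic_neq_power[OF assms(1), of n] generic_neq_power[OF assms(3), of n]
      generic_neq_power[OF assms(3), of "n+k"] generic_neq_power[OF assms(1), of 0]
    by (auto simp: power_add)
  then show ?thesis
    using generic_nonzero[OF assms(1)] generic_nonzero[OF assms(2)]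
    unfolding aw_coeff_def aw_term_mult_q[OF assms] aw_norm_mult_q[OF assms]
    by (simp add: divide_simps)
qed

lemma aw_coeff_Suc_degree:
  assumes "generic a" "generic b" "generic (a*b)"
  shows "aw_coeff n a b k * ((1 - q*q^n)^2 * (a - q*q^n) * (b - q*q^n) * (a*b - q*q^n*q^k))
    = aw_coeff (Suc n) a b k * (s * (a*b - q*q^n*q^n) * (a*b - q*q*q^n*q^n) * (q*q^n - q^k))"
proof -
  have "a*b - q*q^n \<noteq> 0" "a*b - q*q^n*q^n \<noteq> 0" "a*b - q*q^n*(q*q^n) \<noteq> 0"
      "a*b - q*q^n*q^k \<noteq> 0"
    using generic_neq_power[OF assms(3), of "n+1"] generic_neq_power[OF assms(3), of "n+n+1"]
      generic_neq_power[OF assms(3), of "n+n+2"] generic_neq_power[OF assms(3), of "n+k+1"]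
    by (auto simp: power_add mult_ac)
  then show ?thesis
    using generic_nonzero[OF assms(1)] generic_nonzero[OF assms(2)]
    unfolding aw_coeff_def aw_term_Suc_degree[OF assms(3), of n] aw_norm_Suc_degree[OF assms(3)]
    by (simp add: divide_simps) (simp add: algebra_simps power2_eq_square)
qed

lemma aw_coeff_above_degree: "aw_coeff n a b (Suc n) = 0"
  by (simp add: aw_coeff_def aw_term_def qpoch_Suc)

definition aw_basis :: "complex \<Rightarrow> nat \<Rightarrow> complex" where
  "aw_basis x k = qpoch q (- s * x) k * qpoch q (- s / x) k"

definition aw_poly :: "nat \<Rightarrow> complex \<Rightarrow> complex \<Rightarrow> complex \<Rightarrow> complex" where
  "aw_poly n a b x = (\<Sum>k\<le>n. aw_coeff n a b k * aw_basis x k)"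

lemma AWP_eq_aw_poly: "r ^ 2 = s \<Longrightarrow> AWP q r n x x0 x1 = aw_poly n (x0^2) (x1^2) x"
  unfolding AWP_def aw_poly_def aw_coeff_def aw_norm_def aw_term_def aw_basis_def
  by (simp add: sum_distrib_left mult.assoc)

definition aw_basis_mult_diag :: "complex \<Rightarrow> nat \<Rightarrow> complex" where
  "aw_basis_mult_diag A k = s + A*A/s - A*(1 + q*q^k*q^k)/(s*q^k)"

definition aw_basis_mult_next :: "complex \<Rightarrow> nat \<Rightarrow> complex" where
  "aw_basis_mult_next A k = A/(s*q^k)"

lemma aw_basis_mult:
  assumes "x \<noteq> 0"
  shows "(s*x + A) * (s + x*A) / (s*x) * aw_basis x k
    = aw_basis_mult_diag A k * aw_basis x k + aw_basis_mult_next A k * aw_basis x (Suc k)"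
proof -
  have "aw_basis x (Suc k) = aw_basis x k * ((1 + s*x*q^k) * (1 + s/x*q^k))"
    unfolding aw_basis_def qpoch_Suc by (simp add: mult_ac)
  then show ?thesis
    unfolding aw_basis_mult_diag_def aw_basis_mult_next_def using assms
    by (simp add: divide_simps) (simp add: algebra_simps power2_eq_square flip: s_squared)
qed

lemma aw_basis_mult_diag_Suc:
  "aw_basis_mult_diag (q*c) (Suc j) = (c - q*q^j) * (q*q*c*q^j - 1) / (s*q^j)"
  unfolding aw_basis_mult_diag_def
  by (simp add: divide_simps) (simp add: algebra_simps power2_eq_square flip: s_squared)

section \<open>Contiguous relations\<close>

lemma aw_coeff_contiguous_up:
  assumes "generic a" "generic b" "generic (a*b)"
  shows "aw_coeff (Suc m) (q*a) b k = aw_coeff (Suc m) a b k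
    + a * (1 - q*q^m)^2 * (b - q*q^m)^2 / (s * (a*b - q*q^m*q^m) * (a*b - q*q*q^m*q^m))
      * aw_coeff m a b k"
proof -
  have nz: "a - q*q^m \<noteq> 0" "b - q*q^m \<noteq> 0" "a*b - q*q^m*q^k \<noteq> 0"
      "a*b - q*q^m*q^m \<noteq> 0" "a*b - q*q*q^m*q^m \<noteq> 0"
    using generic_neq_power[OF assms(1), of "Suc m"] generic_neq_power[OF assms(2), of "Suc m"]
      generic_neq_power[OF assms(3), of "m+k+1"] generic_neq_power[OF assms(3), of "m+m+1"]
      generic_neq_power[OF assms(3), of "m+m+2"]
    by (auto simp: power_add mult_ac)
  have shifted: "aw_coeff (Suc m) (q*a) b k
      = aw_coeff (Suc m) a b k * (a*b - q*q^m*(q*q^m)) * (a - q^k)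
        / ((a - q*q^m) * (a*b - q*q^m*q^k))"
    using aw_coeff_mult_q[OF assms, of "Suc m" k] nz by (simp add: divide_simps mult_ac)
  have lower_degree: "aw_coeff m a b k = aw_coeff (Suc m) a b k
      * (s * (a*b - q*q^m*q^m) * (a*b - q*q*q^m*q^m) * (q*q^m - q^k))
      / ((1 - q*q^m)^2 * (a - q*q^m) * (b - q*q^m) * (a*b - q*q^m*q^k))"
    using aw_coeff_Suc_degree[OF assms, of m k] nz by (simp add: divide_simps mult_ac)
  show ?thesis
    unfolding shifted lower_degree using nz generic_nonzero[OF assms(1)]
    by (simp add: divide_simps) (simp add: algebra_simps power2_eq_square)
qed

lemma aw_poly_contiguous_up:
  assumes "generic a" "generic b" "generic (a*b)"
  shows "aw_poly (Suc m) (q*a) b x = aw_poly (Suc m) a b x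
    + a * (1 - q*q^m)^2 * (b - q*q^m)^2 / (s * (a*b - q*q^m*q^m) * (a*b - q*q*q^m*q^m))
      * aw_poly m a b x"
    (is "_ = _ + ?L * _")
proof -
  have "aw_poly (Suc m) (q*a) b x
      = (\<Sum>k\<le>Suc m. (aw_coeff (Suc m) a b k + ?L * aw_coeff m a b k) * aw_basis x k)"
    unfolding aw_poly_def aw_coeff_contiguous_up[OF assms] ..
  also have "\<dots> = aw_poly (Suc m) a b x + ?L * (\<Sum>k\<le>Suc m. aw_coeff m a b k * aw_basis x k)"
    unfolding aw_poly_def by (simp only: distrib_right sum.distrib sum_distrib_left mult.assoc)
  also have "(\<Sum>k\<le>Suc m. aw_coeff m a b k * aw_basis x k) = aw_poly m a b x"
    by (simp add: aw_poly_def aw_coeff_above_degree)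
  finally show ?thesis .
qed

lemma aw_coeff_Suc_Suc_mult_q:
  assumes "generic c" "generic b" "generic (c*b)" and "j \<le> n"
  shows "aw_coeff (Suc n) (q*c) b (Suc j)
      * (s * q^n * (c*b - q*q^n*q^n) * (1 - q*q^j)^2 * (b - q*q^j))
    = aw_coeff n c b j * ((1 - q*q^n)^2 * (b - q*q^n) * (c*b - q*q^n*q^j))"
proof -
  have gqc: "generic (q*c)" "generic (q*c*b)"
    using generic_mult_q[OF assms(1)] generic_mult_q[OF assms(3)] by (simp_all add: mult.assoc)
  define T J where "T = q^n" and "J = q^j"
  have nz: "1 - q*J \<noteq> 0" "c - q*J \<noteq> 0" "b - q*J \<noteq> 0" "c - T \<noteq> 0" "c - J \<noteq> 0"
      "b - q*T \<noteq> 0" "c*b - T*J \<noteq> 0" "c*b - q*T*J \<noteq> 0" "c*b - T*T \<noteq> 0"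
      "c*b - q*T*T \<noteq> 0" "c*b - q*q*T*T \<noteq> 0" "q*T - J \<noteq> 0" "T \<noteq> 0" "c \<noteq> 0"
    using generic_neq_power[OF assms(1), of "Suc j"] generic_neq_power[OF assms(1), of n]
      generic_neq_power[OF assms(1), of j] generic_neq_power[OF assms(2), of "Suc j"]
      generic_neq_power[OF assms(2), of "Suc n"] generic_neq_power[OF assms(3), of "n+j"]
      generic_neq_power[OF assms(3), of "n+j+1"] generic_neq_power[OF assms(3), of "n+n"]
      generic_neq_power[OF assms(3), of "n+n+1"] generic_neq_power[OF assms(3), of "n+n+2"]
      q_power_eq_iff[of "Suc n" j] assms(4)
      generic_nonzero[OF assms(1)]
    unfolding T_def J_def by (auto simp: power_add mult_ac)
  have shifted: "aw_coeff n (q*c) b j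
      = aw_coeff n c b j * ((c*b - T*T) * (c - J)) / ((c - T) * (c*b - T*J))"
    using aw_coeff_mult_q[OF assms(1-3), of n j] nz unfolding T_def J_def
    by (simp add: divide_simps mult_ac)
  (* The degree step is taken at index j: at index j+1 its factor q^(n+1) - q^(j+1) vanishes
     for j = n. *)
  have raised: "aw_coeff (Suc n) (q*c) b j = aw_coeff n (q*c) b j
      * ((1 - q*T)^2 * (q*c - q*T) * (b - q*T) * (q*c*b - q*T*J))
      / (s * (q*c*b - q*T*T) * (q*c*b - q*q*T*T) * (q*T - J))"
    using aw_coeff_Suc_degree[OF gqc(1) assms(2) gqc(2), of n j] nz unfolding T_def J_def
    by (simp add: divide_simps mult_ac)
  have raised_index: "aw_coeff (Suc n) (q*c) b (Suc j) = aw_coeff (Suc n) (q*c) b j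
      * (q * (q*T - J) * (q*c*b - q*(q*T)*J)) / (q*T * (1 - q*J)^2 * (q*c - q*J) * (b - q*J))"
    using aw_coeff_Suc_index[OF gqc(1) assms(2), of "Suc n" j] nz unfolding T_def J_def
    by (simp add: divide_simps mult_ac)
  show ?thesis
    unfolding T_def[symmetric] J_def[symmetric] raised_index raised shifted using nz
    by (simp add: divide_simps) (simp add: algebra_simps power2_eq_square)
qed

lemma aw_coeff_contiguous_down_Suc:
  assumes "generic c" "generic b" "generic (c*b)" and "j \<le> n"
  shows "aw_coeff n c b (Suc j) * aw_basis_mult_diag (q*c) (Suc j)
      + aw_coeff n c b j * aw_basis_mult_next (q*c) j
    = q*c * (aw_coeff (Suc n) (q*c) b (Suc j)
      + s*(c*b - q^n)^2*(c - q^n)^2 / (c*(c*b - q^n*q^n)*(c*b - q*q^n*q^n))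
        * aw_coeff n (q*c) b (Suc j))"
proof -
  define T J C where "T = q^n" and "J = q^j" and "C = aw_coeff n c b j"
  have nz: "1 - q*J \<noteq> 0" "c - q*J \<noteq> 0" "b - q*J \<noteq> 0" "c - T \<noteq> 0" "c*b - q*T*J \<noteq> 0"
      "c*b - T*T \<noteq> 0" "c*b - q*T*T \<noteq> 0" "T \<noteq> 0" "J \<noteq> 0" "c \<noteq> 0"
    using generic_neq_power[OF assms(1), of "Suc j"] generic_neq_power[OF assms(1), of n]
      generic_neq_power[OF assms(2), of "Suc j"] generic_neq_power[OF assms(3), of "n+j+1"]
      generic_neq_power[OF assms(3), of "n+n"] generic_neq_power[OF assms(3), of "n+n+1"]
      generic_nonzero[OF assms(1)]
    unfolding T_def J_def by (auto simp: power_add mult_ac)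
  (* Every coefficient is expressed through C; what is left is the identity numerators. *)
  have index_step: "aw_coeff n c b (Suc j)
      = C * (q * (T - J) * (c*b - q*T*J)) / (T * (1 - q*J)^2 * (c - q*J) * (b - q*J))"
    using aw_coeff_Suc_index[OF assms(1,2), of n j] nz unfolding T_def J_def C_def
    by (simp add: divide_simps mult_ac)
  have shifted_step: "aw_coeff n (q*c) b (Suc j)
      = C * (q * (T - J) * (c*b - T*T)) / (T * (1 - q*J)^2 * (b - q*J) * (c - T))"
  proof -
    have "aw_coeff n (q*c) b (Suc j)
        = aw_coeff n c b (Suc j) * ((c*b - T*T) * (c - q*J)) / ((c - T) * (c*b - q*T*J))"
      using aw_coeff_mult_q[OF assms(1-3), of n "Suc j"] nz unfolding T_def J_def
      by (simp add: divide_simps mult_ac)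
    then show ?thesis
      unfolding index_step using nz by (simp add: divide_simps) (simp add: mult_ac power2_eq_square)
  qed
  have raised_step: "aw_coeff (Suc n) (q*c) b (Suc j)
      = C * ((1 - q*T)^2 * (b - q*T) * (c*b - q*T*J))
        / (s * T * (c*b - q*T*T) * (1 - q*J)^2 * (b - q*J))"
    using aw_coeff_Suc_Suc_mult_q[OF assms] nz unfolding T_def J_def C_def
    by (simp add: divide_simps mult_ac)
  have lhs: "aw_coeff n c b (Suc j) * ((c - q*J) * (q*q*c*J - 1) / (s*J)) + C * ((q*c)/(s*J))
    = C * q * ((T - J)*(c*b - q*T*J)*(q*q*c*J - 1) + c*T*(1 - q*J)^2*(b - q*J))
      / (s*T*J*(1 - q*J)^2*(b - q*J))"
    unfolding index_step using nz
    by (simp add: divide_simps) (simp add: algebra_simps power2_eq_square)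
  have rhs: "q*c * (aw_coeff (Suc n) (q*c) b (Suc j)
      + s*(c*b - T)^2*(c - T)^2 / (c*(c*b - T*T)*(c*b - q*T*T)) * aw_coeff n (q*c) b (Suc j))
    = C * q * (c*J*(1 - q*T)^2*(b - q*T)*(c*b - q*T*J) + q*(s*s)*J*(c*b - T)^2*(c - T)*(T - J))
      / (s*T*J*(c*b - q*T*T)*(1 - q*J)^2*(b - q*J))"
    unfolding shifted_step raised_step using nz
    by (simp add: divide_simps) (simp add: algebra_simps power2_eq_square)
  have numerators:
    "((T - J)*(c*b - q*T*J)*(q*q*c*J - 1) + c*T*(1 - q*J)^2*(b - q*J)) * (c*b - q*T*T)
      = c*J*(1 - q*T)^2*(b - q*T)*(c*b - q*T*J) + q*q*J*(c*b - T)^2*(c - T)*(T - J)"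
    by algebra
  have "s * s = q"
    using s_squared by (simp add: power2_eq_square)
  then show ?thesis
    unfolding aw_basis_mult_diag_Suc aw_basis_mult_next_def
      T_def[symmetric] J_def[symmetric] C_def[symmetric] lhs rhs
    using nz by (simp add: divide_simps numerators)
qed

lemma aw_coeff_contiguous_down_0:
  assumes "generic c" "generic b" "generic (c*b)"
  shows "aw_coeff n c b 0 * aw_basis_mult_diag (q*c) 0
    = q*c * (aw_coeff (Suc n) (q*c) b 0
      + s*(c*b - q^n)^2*(c - q^n)^2 / (c*(c*b - q^n*q^n)*(c*b - q*q^n*q^n)) * aw_coeff n (q*c) b 0)"
proof -
  have gqc: "generic (q*c)" "generic (q*c*b)"
    using generic_mult_q[OF assms(1)] generic_mult_q[OF assms(3)] by (simp_all add: mult.assoc)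
  define T C where "T = q^n" and "C = aw_coeff n c b 0"
  have nz: "c - T \<noteq> 0" "c - 1 \<noteq> 0" "b - q*T \<noteq> 0" "c*b - T \<noteq> 0" "c*b - T*T \<noteq> 0"
      "c*b - q*T*T \<noteq> 0" "c*b - q*q*T*T \<noteq> 0" "q*T - 1 \<noteq> 0" "c \<noteq> 0"
    using generic_neq_power[OF assms(1), of n] generic_neq_power[OF assms(1), of 0]
      generic_neq_power[OF assms(2), of "Suc n"] generic_neq_power[OF assms(3), of n]
      generic_neq_power[OF assms(3), of "n+n"] generic_neq_power[OF assms(3), of "n+n+1"]
      generic_neq_power[OF assms(3), of "n+n+2"] generic_nonzero[OF assms(1)]
    unfolding T_def by (auto simp: power_add mult_ac)
  have shifted: "aw_coeff n (q*c) b 0 = C * ((c*b - T*T) * (c - 1)) / ((c - T) * (c*b - T))"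
    using aw_coeff_mult_q[OF assms, of n 0] nz unfolding T_def C_def
    by (simp add: divide_simps mult_ac)
  have raised: "aw_coeff (Suc n) (q*c) b 0
      = C * ((c - 1) * (1 - q*T)^2 * (b - q*T)) / (s * (c*b - q*T*T) * (q*T - 1))"
  proof -
    have degree_step: "aw_coeff (Suc n) (q*c) b 0 = aw_coeff n (q*c) b 0
        * ((1 - q*T)^2 * (q*c - q*T) * (b - q*T) * (q*c*b - q*T))
        / (s * (q*c*b - q*T*T) * (q*c*b - q*q*T*T) * (q*T - 1))"
      using aw_coeff_Suc_degree[OF gqc(1) assms(2) gqc(2), of n 0] nz unfolding T_def
      by (simp add: divide_simps mult_ac)
    show ?thesis
      unfolding degree_step shifted using nz
      by (simp add: divide_simps) (simp add: algebra_simps power2_eq_square)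
  qed
  show ?thesis
    unfolding T_def[symmetric] C_def[symmetric] shifted raised aw_basis_mult_diag_def using nz
    by (simp add: divide_simps) (simp add: algebra_simps power2_eq_square flip: s_squared)
qed

lemma aw_poly_contiguous_down:
  assumes "x \<noteq> 0" "generic c" "generic b" "generic (c*b)"
  shows "(s*x + q*c) * (s + x*(q*c)) / (s*x) * aw_poly n c b x
    = q*c * aw_poly (Suc n) (q*c) b x
      + q*c * (s*(c*b - q^n)^2*(c - q^n)^2 / (c*(c*b - q^n*q^n)*(c*b - q*q^n*q^n)))
        * aw_poly n (q*c) b x"
    (is "?H * _ = _ + q*c * ?G * _")
proof -
  let ?c = "aw_coeff n c b" and ?d = "aw_basis_mult_diag (q*c)" and ?e = "aw_basis_mult_next (q*c)"
  let ?f = "\<lambda>k. q*c * (aw_coeff (Suc n) (q*c) b k + ?G * aw_coeff n (q*c) b k)"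
  have "?H * aw_poly n c b x
      = (\<Sum>k\<le>n. ?c k * ?d k * aw_basis x k + ?c k * ?e k * aw_basis x (Suc k))"
  proof -
    have "?H * (?c k * aw_basis x k) = ?c k * (?H * aw_basis x k)" for k
      by (rule mult.left_commute)
    then show ?thesis
      unfolding aw_poly_def sum_distrib_left aw_basis_mult[OF assms(1)]
      by (simp add: distrib_left mult.assoc)
  qed
  also have "\<dots> = (\<Sum>k\<le>Suc n. ?c k * ?d k * aw_basis x k)
      + (\<Sum>k\<le>n. ?c k * ?e k * aw_basis x (Suc k))"
    by (simp add: sum.distrib aw_coeff_above_degree)
  also have "\<dots> = ?c 0 * ?d 0 * aw_basis x 0
      + (\<Sum>j\<le>n. (?c (Suc j) * ?d (Suc j) + ?c j * ?e j) * aw_basis x (Suc j))"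
    by (simp only: sum.atMost_Suc_shift sum.distrib distrib_right add.assoc)
  also have "\<dots> = ?f 0 * aw_basis x 0 + (\<Sum>j\<le>n. ?f (Suc j) * aw_basis x (Suc j))"
    using aw_coeff_contiguous_down_0[OF assms(2-4), of n] aw_coeff_contiguous_down_Suc[OF assms(2-4)]
    by simp
  also have "\<dots> = (\<Sum>k\<le>Suc n. ?f k * aw_basis x k)"
    by (rule sum.atMost_Suc_shift[symmetric])
  also have "\<dots> = q*c * (\<Sum>k\<le>Suc n. aw_coeff (Suc n) (q*c) b k * aw_basis x k)
      + q*c * ?G * (\<Sum>k\<le>Suc n. aw_coeff n (q*c) b k * aw_basis x k)"
    by (simp only: distrib_left distrib_right sum.distrib sum_distrib_left mult.assoc)
  also have "\<dots> = q*c * aw_poly (Suc n) (q*c) b x + q*c * ?G * aw_poly n (q*c) b x"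
    by (simp only: aw_poly_def sum.atMost_Suc aw_coeff_above_degree mult_zero_left add_0_right)
  finally show ?thesis .
qed

lemma lambdaAW_Suc_eq:
  assumes "r^2 = s" "x0^2 = a" "x1^2 = b" "generic a" "generic b" "generic (a*b)"
  shows "lambdaAW q r (Suc m) x0 x1
    = a * (1 - q*q^m)^2 * (b - q*q^m)^2 / (s * (a*b - q*q^m*q^m) * (a*b - q*q*q^m*q^m))"
proof -
  have "q^(2 * Suc m - 1) = q*q^m*q^m" "q^(2 * Suc m) = q*q*q^m*q^m"
    by (simp_all add: mult_2 power_add)
  moreover have "a*b - q*q^m*q^m \<noteq> 0" "a*b - q*q*q^m*q^m \<noteq> 0"
    using generic_neq_power[OF assms(6), of "Suc (m+m)"]
      generic_neq_power[OF assms(6), of "Suc (Suc (m+m))"]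
    by (simp_all add: power_add mult_ac)
  ultimately show ?thesis
    using generic_nonzero[OF assms(4)] generic_nonzero[OF assms(5)]
    unfolding lambdaAW_def assms(1-3)
    by (simp add: divide_simps) (simp add: algebra_simps power2_eq_square)
qed

lemma gammaAW_div_lambdaAW_eq:
  assumes "n \<ge> 1" "r^2 = s" "y0^2 = c" "x1^2 = b" "generic c" "generic b" "generic (c*b)"
  shows "gammaAW q n y0 x1 / lambdaAW q r n y0 x1
    = s*(c*b - q^n)^2*(c - q^n)^2 / (c*(c*b - q^n*q^n)*(c*b - q*q^n*q^n))"
proof -
  have "q^(2*n) = q^n*q^n" "q^(2*n+1) = q*q^n*q^n"
    by (simp_all add: mult_2 power_add)
  moreover have "1 - q^n \<noteq> 0" "b - q^n \<noteq> 0" "c*b - q^(2*n-1) \<noteq> 0" "c*b - q^n*q^n \<noteq> 0"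
      "c*b - q*q^n*q^n \<noteq> 0" "c - q^n \<noteq> 0" "c*b - q^n \<noteq> 0"
    using assms(1) generic_neq_power[OF assms(6), of n] generic_neq_power[OF assms(7), of "2*n-1"]
      generic_neq_power[OF assms(7), of "n+n"] generic_neq_power[OF assms(7), of "Suc (n+n)"]
      generic_neq_power[OF assms(5), of n] generic_neq_power[OF assms(7), of n]
    by (simp_all add: power_add mult_ac)
  ultimately show ?thesis
    using generic_nonzero[OF assms(5)] generic_nonzero[OF assms(6)]
    unfolding gammaAW_def lambdaAW_def assms(2-4)
    by (simp add: divide_simps) (simp add: algebra_simps power2_eq_square)
qed

end

section \<open>The operators A2 and A4\<close>

lemma A2_Pbar_expansion:
  fixes q r :: complex and \<nu> :: "nat \<Rightarrow> complex \<Rightarrow> complex \<Rightarrow> complex"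
  assumes q: "0 < norm q" "norm q < 1" and r: "r ^ 4 = q"
    and nu: "\<And>m a b. \<nu> m a b \<noteq> 0" and n: "n \<ge> 1"
    and x: "x \<noteq> 0" and x0: "x0 \<noteq> 0" and x1: "x1 \<noteq> 0"
    and generic: "\<And>m::int. x0 ^ 2 \<noteq> q powi m \<and> x1 ^ 2 \<noteq> q powi m \<and> x0 ^ 2 * x1 ^ 2 \<noteq> q powi m"
  shows "A2 r (Pbar q r \<nu> n) x x0 x1 =
       \<i> * (1 / r) / (1 - x0 ^ 2) *
       ( x0 ^ 2 * \<nu> n (x0 / r ^ 2) x1 / \<nu> (n + 1) x0 x1 * Pbar q r \<nu> (n + 1) x x0 x1
       - \<nu> n (r ^ 2 * x0) x1 / \<nu> (n - 1) x0 x1 * lambdaAW q r n x0 x1 * Pbar q r \<nu> (n - 1) x x0 x1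
       + ( x0 ^ 2 * gammaAW q n (x0 / r ^ 2) x1 / lambdaAW q r n (x0 / r ^ 2) x1
             * (\<nu> n (x0 / r ^ 2) x1 / \<nu> n x0 x1)
           - \<nu> n (r ^ 2 * x0) x1 / \<nu> n x0 x1 ) * Pbar q r \<nu> n x x0 x1 )"
proof -
  interpret askey_wilson q "r^2"
    using q r by unfold_locales (simp_all flip: power_mult)
  obtain m where m: "n = Suc m"
    using n by (cases n) auto
  define a b c where "a = x0^2" and "b = x1^2" and "c = x0^2/q"
  have ga: "generic a" and gb: "generic b" and gab: "generic (a*b)"
    unfolding generic_def a_def b_def using generic x0 x1 by auto
  have gc: "generic c" and gcb: "generic (c*b)" and qc: "q*c = a"
    using generic_div_q[OF ga] generic_div_q[OF gab] unfolding a_def c_def by simp_all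
  have sq: "(r^2*x0)^2 = q*a" "(x0/r^2)^2 = c"
    unfolding a_def c_def r[symmetric] by (simp_all add: power_mult_distrib power_divide flip: power_mult)
  have up: "AWP q r n x (r^2*x0) x1
      = AWP q r n x x0 x1 + lambdaAW q r n x0 x1 * AWP q r (n-1) x x0 x1"
    unfolding m AWP_eq_aw_poly[OF refl] sq a_def[symmetric] b_def[symmetric]
      lambdaAW_Suc_eq[OF refl a_def[symmetric] b_def[symmetric] ga gb gab]
    using aw_poly_contiguous_up[OF ga gb gab] by simp
  have down: "((r^2*x + x0^2)*(r^2 + x*x0^2))/(r^2*x) * AWP q r n x (x0/r^2) x1
      = x0^2 * AWP q r (n+1) x x0 x1
        + x0^2 * (gammaAW q n (x0/r^2) x1 / lambdaAW q r n (x0/r^2) x1) * AWP q r n x x0 x1"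
    unfolding AWP_eq_aw_poly[OF refl] sq a_def[symmetric] b_def[symmetric]
      gammaAW_div_lambdaAW_eq[OF n refl sq(2) b_def[symmetric] gc gb gcb]
    using aw_poly_contiguous_down[OF x gc gb gcb, of n] unfolding qc by simp
  have nz: "1 - x0^2 \<noteq> 0" "r \<noteq> 0"
    using generic[of 0] q r by auto
  have "A2 r (Pbar q r \<nu> n) x x0 x1 = \<i> * (1/r) / (1 - x0^2) *
      (- \<nu> n (r^2*x0) x1 * AWP q r n x (r^2*x0) x1
       + \<nu> n (x0/r^2) x1 * (((r^2*x + x0^2)*(r^2 + x*x0^2))/(r^2*x) * AWP q r n x (x0/r^2) x1))"
    unfolding A2_def G0_x0_def eth0_def Pbar_def using nz x by (simp add: divide_simps)
  also have "\<dots> = \<i> * (1/r) / (1 - x0^2) *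
      (- \<nu> n (r^2*x0) x1 * (AWP q r n x x0 x1 + lambdaAW q r n x0 x1 * AWP q r (n-1) x x0 x1)
       + \<nu> n (x0/r^2) x1 * (x0^2 * AWP q r (n+1) x x0 x1
           + x0^2 * (gammaAW q n (x0/r^2) x1 / lambdaAW q r n (x0/r^2) x1) * AWP q r n x x0 x1))"
    unfolding up down ..
  finally show ?thesis
    unfolding Pbar_def using nz nu by (simp add: divide_simps) (simp add: algebra_simps)
qed

lemma AWP_swap: "AWP q r n x x1 x0 = AWP q r n x x0 x1"
  unfolding AWP_def by (simp add: ac_simps)

lemma gammaAW_swap: "gammaAW q n x1 x0 = gammaAW q n x0 x1"
  unfolding gammaAW_def by (simp add: ac_simps)

lemma Pbar_swap: "Pbar q r (\<lambda>m u v. \<nu> m v u) k x x1 x0 = Pbar q r \<nu> k x x0 x1"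
  unfolding Pbar_def by (simp add: AWP_swap)

lemma A4_eq_A2_swap:
  "A4 r (Pbar q r \<nu> n) x x0 x1 = A2 r (Pbar q r (\<lambda>m u v. \<nu> m v u) n) x x1 x0"
  unfolding A4_def A2_def G0_x1_def G0_x0_def eth0_def eth1_def Pbar_def by (simp add: AWP_swap)

theorem mainTheorem4:
  fixes q r :: complex and \<nu> :: "nat \<Rightarrow> complex \<Rightarrow> complex \<Rightarrow> complex"
    and n :: nat and x x0 x1 :: complex
  assumes q: "0 < norm q" "norm q < 1"
    and r: "r ^ 4 = q"
    and nu: "\<And>m a b. \<nu> m a b \<noteq> 0"
    and n: "n \<ge> 1"
    and gen_x: "x \<noteq> 0" and gen0: "x0 \<noteq> 0" and gen1: "x1 \<noteq> 0"
    and generic: "\<And>m::int. x0 ^ 2 \<noteq> q powi m \<and> x1 ^ 2 \<noteq> q powi m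
                              \<and> x0 ^ 2 * x1 ^ 2 \<noteq> q powi m"
  shows
    "A2 r (Pbar q r \<nu> n) x x0 x1 =
       \<i> * (1 / r) / (1 - x0 ^ 2) *
       ( x0 ^ 2 * \<nu> n (x0 / r ^ 2) x1 / \<nu> (n + 1) x0 x1 * Pbar q r \<nu> (n + 1) x x0 x1
       - \<nu> n (r ^ 2 * x0) x1 / \<nu> (n - 1) x0 x1 * lambdaAW q r n x0 x1 * Pbar q r \<nu> (n - 1) x x0 x1
       + ( x0 ^ 2 * gammaAW q n (x0 / r ^ 2) x1 / lambdaAW q r n (x0 / r ^ 2) x1
             * (\<nu> n (x0 / r ^ 2) x1 / \<nu> n x0 x1)
           - \<nu> n (r ^ 2 * x0) x1 / \<nu> n x0 x1 ) * Pbar q r \<nu> n x x0 x1 )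
   \<and> A4 r (Pbar q r \<nu> n) x x0 x1 =
       \<i> * (1 / r) / (1 - x1 ^ 2) *
       ( x1 ^ 2 * \<nu> n x0 (x1 / r ^ 2) / \<nu> (n + 1) x0 x1 * Pbar q r \<nu> (n + 1) x x0 x1
       - \<nu> n x0 (r ^ 2 * x1) / \<nu> (n - 1) x0 x1 * lambdaAW q r n x1 x0 * Pbar q r \<nu> (n - 1) x x0 x1
       + ( x1 ^ 2 * gammaAW q n x0 (x1 / r ^ 2) / lambdaAW q r n (x1 / r ^ 2) x0
             * (\<nu> n x0 (x1 / r ^ 2) / \<nu> n x0 x1)
           - \<nu> n x0 (r ^ 2 * x1) / \<nu> n x0 x1 ) * Pbar q r \<nu> n x x0 x1 )"
proof -
  have nu_swap: "\<And>m a b. \<nu> m b a \<noteq> 0"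
    using nu .
  have generic_swap:
    "\<And>m::int. x1 ^ 2 \<noteq> q powi m \<and> x0 ^ 2 \<noteq> q powi m \<and> x1 ^ 2 * x0 ^ 2 \<noteq> q powi m"
    using generic by (simp add: mult.commute)
  from A2_Pbar_expansion[OF q r nu n gen_x gen0 gen1 generic]
    A2_Pbar_expansion[where \<nu> = "\<lambda>m u v. \<nu> m v u", OF q r nu_swap n gen_x gen1 gen0 generic_swap]
  show ?thesis
    unfolding A4_eq_A2_swap Pbar_swap[where \<nu> = \<nu>] gammaAW_swap[of q n "x1 / r^2" x0]
    by (rule conjI)
qed

end
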